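(* Let $(L,d)$ be a metric locale and $b\in L$ with $b\ne0$. Then there exist $c\in L$ with $0\ne c\le b$ and $n\in\mathbb{N}$ such that for every $x\in L$ with $d(x)<\frac1n$, either $x\wedge b^*=0$ or $x\wedge c=0$.
   Context: A frame (locale) $L$ is a complete lattice in which finite meets distribute over arbitrary joins; $b^*$ denotes the pseudocomplement of $b$. A diameter on $L$ is a map $d\colon L\to[0,+\infty]$ with (D1) $d(0)=0$; (D2) $a\le b\Rightarrow d(a)\le d(b)$; (D3) $a\wedge b\neq 0\Rightarrow d(a\vee b)\le d(a)+d(b)$; (D4) for every $\varepsilon>0$, $\bigvee\{a\in L\mid d(a)<\varepsilon\}=1$. Write $y\lhd_\varepsilon a$ if for every $c\in L$ with $d(c)<\varepsilon$, $c\wedge y\ne0$ implies $c\le a$. The diameter is admissible if $a=\bigvee\{y\in L\mid y\lhd_\varepsilon a \text{ for some }\varepsilon>0\}$ for all $a\in L$; a metric locale is a pair $(L,d)$ with $d$ an admissible diameter. *)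

theory Defs
  imports "HOL-Analysis.Analysis" "HOL-Library.Extended_Nonnegative_Real"
begin

definition frame_law :: "'a::complete_lattice itself \<Rightarrow> bool" where
  "frame_law _ \<longleftrightarrow> (\<forall>(a::'a) S. inf a (Sup S) = Sup ((\<lambda>s. inf a s) ` S))"

definition pcomp :: "'a::complete_lattice \<Rightarrow> 'a" where
  "pcomp b = Sup {a. inf a b = bot}"

definition diameter :: "('a::complete_lattice \<Rightarrow> ennreal) \<Rightarrow> bool" where
  "diameter d \<longleftrightarrow>
     d bot = 0 \<and>
     (\<forall>a b. a \<le> b \<longrightarrow> d a \<le> d b) \<and>
     (\<forall>a b. inf a b \<noteq> bot \<longrightarrow> d (sup a b) \<le> d a + d b) \<and>
     (\<forall>\<epsilon>::real. \<epsilon> > 0 \<longrightarrow> Sup {a. d a < ennreal \<epsilon>} = top)"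

definition wbelow :: "('a::complete_lattice \<Rightarrow> ennreal) \<Rightarrow> real \<Rightarrow> 'a \<Rightarrow> 'a \<Rightarrow> bool" where
  "wbelow d \<epsilon> y a \<longleftrightarrow> (\<forall>c. d c < ennreal \<epsilon> \<longrightarrow> inf c y \<noteq> bot \<longrightarrow> c \<le> a)"

definition admissible :: "('a::complete_lattice \<Rightarrow> ennreal) \<Rightarrow> bool" where
  "admissible d \<longleftrightarrow> (\<forall>a. a = Sup {y. \<exists>\<epsilon>::real. \<epsilon> > 0 \<and> wbelow d \<epsilon> y a})"

definition metric_locale :: "('a::complete_lattice \<Rightarrow> ennreal) \<Rightarrow> bool" where
  "metric_locale d \<longleftrightarrow> frame_law TYPE('a) \<and> diameter d \<and> admissible d"

end

theory Submission
  imports Defs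
begin

(* Admissibility writes b as the join of the elements y with y \<lhd>_\<epsilon> b for some \<epsilon> > 0, so
   b \<noteq> 0 forces one such y to be nonzero; take c = y and 1/n < \<epsilon>. A small x meeting c then
   lies below b, and b is disjoint from b*, hence so is x. *)

lemma inf_pcomp_self:
  assumes "frame_law TYPE('a::complete_lattice)"
  shows "inf b (pcomp b) = (bot :: 'a)"
proof -
  have "inf b (pcomp b) = Sup ((\<lambda>a. inf b a) ` {a. inf a b = bot})"
    using assms unfolding frame_law_def pcomp_def by blast
  also have "\<dots> = bot"
    by (auto simp: Sup_bot_conv inf_commute)
  finally show ?thesis .
qed

lemma wbelow_antimono:
  assumes "wbelow d \<epsilon> y a" and "\<delta> \<le> \<epsilon>"
  shows "wbelow d \<delta> y a"
proof -
  have "ennreal \<delta> \<le> ennreal \<epsilon>"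
    using assms(2) by (rule ennreal_leI)
  then show ?thesis
    using assms(1) unfolding wbelow_def by (meson order_less_le_trans)
qed

lemma admissible_ex_wbelow:
  assumes "admissible d" and "b \<noteq> bot"
  obtains y \<epsilon> where "y \<noteq> bot" "y \<le> b" "\<epsilon> > 0" "wbelow d \<epsilon> y b"
proof -
  let ?Y = "{y. \<exists>\<epsilon>::real. \<epsilon> > 0 \<and> wbelow d \<epsilon> y b}"
  have b_eq: "b = Sup ?Y"
    using assms(1) unfolding admissible_def by blast
  then obtain y where "y \<in> ?Y" "y \<noteq> bot"
    using assms(2) by (metis Sup_bot_conv(1))
  moreover from \<open>y \<in> ?Y\<close> b_eq have "y \<le> b"
    by (metis Sup_upper)
  ultimately show thesis
    using that by blast
qed

lemma wbelow_disjoint_pcomp: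
  assumes "frame_law TYPE('a::complete_lattice)"
    and "wbelow d \<epsilon> y b" and "d x < ennreal \<epsilon>"
  shows "inf x (pcomp b) = bot \<or> inf x y = (bot :: 'a)"
proof (rule disjCI)
  assume "inf x y \<noteq> bot"
  with assms(2,3) have "x \<le> b"
    unfolding wbelow_def by blast
  then have "inf x (pcomp b) \<le> inf b (pcomp b)"
    by (rule inf_mono) simp
  then show "inf x (pcomp b) = bot"
    using inf_pcomp_self[OF assms(1)] by (simp add: bot_unique)
qed

theorem lemma5p3:
  fixes d :: "'a::complete_lattice \<Rightarrow> ennreal" and b :: 'a
  assumes "metric_locale d" and "b \<noteq> bot"
  shows "\<exists>c n. c \<noteq> bot \<and> c \<le> b \<and> n \<ge> (1::nat) \<and>
           (\<forall>x. d x < ennreal (1 / real n) \<longrightarrow> inf x (pcomp b) = bot \<or> inf x c = bot)"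
proof -
  have frame: "frame_law TYPE('a)" and adm: "admissible d"
    using assms(1) unfolding metric_locale_def by auto
  obtain c \<epsilon> where "c \<noteq> bot" "c \<le> b" "\<epsilon> > 0" and c_wbelow: "wbelow d \<epsilon> c b"
    using admissible_ex_wbelow[OF adm assms(2)] .
  obtain n :: nat where "n > 0" "inverse (real n) < \<epsilon>"
    using ex_inverse_of_nat_less[OF \<open>\<epsilon> > 0\<close>] by blast
  then have "wbelow d (1 / real n) c b"
    using wbelow_antimono[OF c_wbelow] by (simp add: inverse_eq_divide)
  then have "\<forall>x. d x < ennreal (1 / real n) \<longrightarrow> inf x (pcomp b) = bot \<or> inf x c = bot"
    using wbelow_disjoint_pcomp[OF frame] by blast
  with \<open>c \<noteq> bot\<close> \<open>c \<le> b\<close> \<open>n > 0\<close> show ?thesis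
    by (metis One_nat_def Suc_leI)
qed

end
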